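(* Let $\Gamma$ be a nilpotent group, let $r\ge1$, and for each $j=1,\ldots,r$ let $x^{(j)}_1,\ldots,x^{(j)}_{m_j}$ be elements of $\Gamma$, regarded as distinct letters. Let $\alpha$ be a commutator form of weight $r$. Then there exist formal commutators $\eta_1,\ldots,\eta_t$ in the letters $x^{(j)}_i$ with the following properties. (i) In $\Gamma$, $\alpha\big(\prod_{i=1}^{m_1}x^{(1)}_i,\ldots,\prod_{i=1}^{m_r}x^{(r)}_i\big)=\eta_1\cdots\eta_t$. (ii) For each tuple $(i_1,\ldots,i_r)$ with $i_j\in[1,m_j]$ there is some $\eta_l$ equal to $\alpha(x^{(1)}_{i_1},\ldots,x^{(r)}_{i_r})$. (iii) For every $l\in[1,t]$ and every $j\in[1,r]$ there is at least one $i\in[1,m_j]$ with $x^{(j)}_i\sqsubset\eta_l$. (iv) The $\eta_l$ are pairwise distinct as formal commutators in the $x^{(j)}_i$. (v) If $\eta_l$ is not of the form $\alpha(x^{(1)}_{i_1},\ldots,x^{(r)}_{i_r})$ then $\eta_l$ has total weight greater than $r$.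
   Context: $[u,v]=u^{-1}v^{-1}uv$. Formal commutators in letters: each letter is one, and $[\beta,\beta']$ is one whenever $\beta,\beta'$ are; they are interpreted as group elements in the obvious way. The total weight of a formal commutator is the number of letter occurrences in it (weight 1 for a letter, and weights add under bracketing). Components: $C(x)=\{x\}$ for a letter, $C([\beta,\beta'])=C(\beta)\cup C(\beta')\cup\{[\beta,\beta']\}$; $\beta\sqsubset\gamma$ means $\beta\in C(\gamma)$. A commutator form of weight $n$ is a map sending an $n$-tuple of letters to a formal commutator, defined recursively: the unique form of weight 1 is $x\mapsto x$; a form of weight $n\ge2$ is any map $\gamma(y_1,\ldots,y_n)=[\gamma_1(y_{\sigma(1)},\ldots,y_{\sigma(n_1)}),\gamma_2(y_{\sigma(n_1+1)},\ldots,y_{\sigma(n)})]$ where $\gamma_1,\gamma_2$ are forms of weights $n_1,n-n_1\ge1$ and $\sigma\in S_n$. Applied to group elements, a form gives a group element. *)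

theory Defs
  imports "HOL-Algebra.Algebra" "HOL-Combinatorics.Permutations"
begin

definition gcomm :: "('g, 'b) monoid_scheme \<Rightarrow> 'g \<Rightarrow> 'g \<Rightarrow> 'g" where
  "gcomm G u v = inv\<^bsub>G\<^esub> u \<otimes>\<^bsub>G\<^esub> inv\<^bsub>G\<^esub> v \<otimes>\<^bsub>G\<^esub> u \<otimes>\<^bsub>G\<^esub> v"

fun lower_central :: "('g, 'b) monoid_scheme \<Rightarrow> nat \<Rightarrow> 'g set" where
  "lower_central G 0 = carrier G"
| "lower_central G (Suc n) =
     generate G {gcomm G x y | x y. x \<in> lower_central G n \<and> y \<in> carrier G}"

definition nilpotent_group :: "('g, 'b) monoid_scheme \<Rightarrow> bool" where
  "nilpotent_group G \<longleftrightarrow> group G \<and> (\<exists>n. lower_central G n = {\<one>\<^bsub>G\<^esub>})"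

fun gprod :: "('g, 'b) monoid_scheme \<Rightarrow> (nat \<Rightarrow> 'g) \<Rightarrow> nat \<Rightarrow> 'g" where
  "gprod G f 0 = \<one>\<^bsub>G\<^esub>"
| "gprod G f (Suc m) = gprod G f m \<otimes>\<^bsub>G\<^esub> f (Suc m)"

fun listprod :: "('g, 'b) monoid_scheme \<Rightarrow> 'g list \<Rightarrow> 'g" where
  "listprod G [] = \<one>\<^bsub>G\<^esub>"
| "listprod G (a # as) = a \<otimes>\<^bsub>G\<^esub> listprod G as"

datatype 'l fcomm = Letter 'l | Comm "'l fcomm" "'l fcomm"

fun fweight :: "'l fcomm \<Rightarrow> nat" where
  "fweight (Letter x) = 1"
| "fweight (Comm a b) = fweight a + fweight b"

text \<open>Components C(beta); beta \<sqsubset> gamma iff beta \<in> components gamma.\<close>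
fun components :: "'l fcomm \<Rightarrow> 'l fcomm set" where
  "components (Letter x) = {Letter x}"
| "components (Comm a b) = components a \<union> components b \<union> {Comm a b}"

fun letters :: "'l fcomm \<Rightarrow> 'l set" where
  "letters (Letter x) = {x}"
| "letters (Comm a b) = letters a \<union> letters b"

fun feval :: "('g, 'b) monoid_scheme \<Rightarrow> ('l \<Rightarrow> 'g) \<Rightarrow> 'l fcomm \<Rightarrow> 'g" where
  "feval G v (Letter x) = v x"
| "feval G v (Comm a b) = gcomm G (feval G v a) (feval G v b)"

text \<open>Syntax of commutator forms: FLeaf is the unique weight-1 form y1 \<mapsto> y1;
  FNode g1 g2 \<sigma> is the form
  (y1..yn) \<mapsto> [g1(y_\<sigma>(1),..,y_\<sigma>(n1)), g2(y_\<sigma>(n1+1),..,y_\<sigma>(n))]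
  with n1 = weight of g1. Tuples are indexed 1..n.\<close>
datatype cform = FLeaf | FNode cform cform "nat \<Rightarrow> nat"

fun form_weight :: "cform \<Rightarrow> nat" where
  "form_weight FLeaf = 1"
| "form_weight (FNode g1 g2 \<sigma>) = form_weight g1 + form_weight g2"

fun wf_form :: "cform \<Rightarrow> bool" where
  "wf_form FLeaf = True"
| "wf_form (FNode g1 g2 \<sigma>) \<longleftrightarrow>
     wf_form g1 \<and> wf_form g2 \<and> \<sigma> permutes {1..form_weight g1 + form_weight g2}"

fun apply_form :: "cform \<Rightarrow> (nat \<Rightarrow> 'l) \<Rightarrow> 'l fcomm" where
  "apply_form FLeaf y = Letter (y 1)"
| "apply_form (FNode g1 g2 \<sigma>) y =
     Comm (apply_form g1 (\<lambda>k. y (\<sigma> k)))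
          (apply_form g2 (\<lambda>k. y (\<sigma> (form_weight g1 + k))))"

definition is_comm_form :: "nat \<Rightarrow> cform \<Rightarrow> bool" where
  "is_comm_form n \<alpha> \<longleftrightarrow> wf_form \<alpha> \<and> form_weight \<alpha> = n"

end

theory Submission
  imports Defs
begin

text \<open>
  The identities t^w = t [t, w], [ab, c] = [a, c]^b [b, c] and [a, bc] = [a, c] [a, b]^c,
  applied recursively along \<alpha>, write \<alpha>(\<Prod>x^(1), \<dots>, \<Prod>x^(r)) as an ordered product of
  left-normed commutators [\<dots>[[u, v], s_1], \<dots>, s_k], where u and v are factors of the expansions
  of the two sub-forms of \<alpha> and each s_i is a factor of one of them. By induction every such
  factor involves a letter of every block, and its weight exceeds r unless it is [u, v] with u and v
  themselves basic for the two sub-forms. The factors are pairwise distinct because u, v and the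
  s_i can be read off from the right spine of the factor, which is the spine of u followed by
  v, s_1, \<dots>, s_k: v is the first entry with letters from the second sub-form. The identities
  hold in any group, so nilpotency is only used to know that \<Gamma> is a group.
\<close>

section \<open>Commutator identities\<close>

definition gconj :: "('g, 'b) monoid_scheme \<Rightarrow> 'g \<Rightarrow> 'g \<Rightarrow> 'g" where
  "gconj G x w = inv\<^bsub>G\<^esub> w \<otimes>\<^bsub>G\<^esub> x \<otimes>\<^bsub>G\<^esub> w"

context group
begin

lemma mult_inv_mult_cancel [simp]: "x \<in> carrier G \<Longrightarrow> y \<in> carrier G \<Longrightarrow> x \<otimes> (inv x \<otimes> y) = y"
  by (simp add: m_assoc[symmetric])

lemma inv_mult_mult_cancel [simp]: "x \<in> carrier G \<Longrightarrow> y \<in> carrier G \<Longrightarrow> inv x \<otimes> (x \<otimes> y) = y"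
  by (simp add: m_assoc[symmetric])

lemma gcomm_closed [simp]: "x \<in> carrier G \<Longrightarrow> y \<in> carrier G \<Longrightarrow> gcomm G x y \<in> carrier G"
  by (simp add: gcomm_def)

lemma gconj_closed [simp]: "x \<in> carrier G \<Longrightarrow> w \<in> carrier G \<Longrightarrow> gconj G x w \<in> carrier G"
  by (simp add: gconj_def)

lemma mult_gcomm_eq_gconj: "x \<in> carrier G \<Longrightarrow> w \<in> carrier G \<Longrightarrow> x \<otimes> gcomm G x w = gconj G x w"
  by (simp add: gcomm_def gconj_def m_assoc)

lemma gconj_one_right [simp]: "x \<in> carrier G \<Longrightarrow> gconj G x \<one> = x"
  by (simp add: gconj_def)

lemma gconj_one_left [simp]: "w \<in> carrier G \<Longrightarrow> gconj G \<one> w = \<one>"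
  by (simp add: gconj_def)

lemma gconj_mult:
  "x \<in> carrier G \<Longrightarrow> y \<in> carrier G \<Longrightarrow> w \<in> carrier G \<Longrightarrow>
   gconj G (x \<otimes> y) w = gconj G x w \<otimes> gconj G y w"
  by (simp add: gconj_def m_assoc)

lemma gconj_gconj:
  "x \<in> carrier G \<Longrightarrow> a \<in> carrier G \<Longrightarrow> b \<in> carrier G \<Longrightarrow>
   gconj G (gconj G x a) b = gconj G x (a \<otimes> b)"
  by (simp add: gconj_def m_assoc inv_mult_group)

lemma gcomm_one_left [simp]: "y \<in> carrier G \<Longrightarrow> gcomm G \<one> y = \<one>"
  by (simp add: gcomm_def m_assoc)

lemma gcomm_one_right [simp]: "x \<in> carrier G \<Longrightarrow> gcomm G x \<one> = \<one>"
  by (simp add: gcomm_def)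

lemma gcomm_mult_left:
  "a \<in> carrier G \<Longrightarrow> b \<in> carrier G \<Longrightarrow> y \<in> carrier G \<Longrightarrow>
   gcomm G (a \<otimes> b) y = gconj G (gcomm G a y) b \<otimes> gcomm G b y"
  by (simp add: gcomm_def gconj_def m_assoc inv_mult_group)

lemma gcomm_mult_right:
  "a \<in> carrier G \<Longrightarrow> b \<in> carrier G \<Longrightarrow> x \<in> carrier G \<Longrightarrow>
   gcomm G x (a \<otimes> b) = gcomm G x b \<otimes> gconj G (gcomm G x a) b"
  by (simp add: gcomm_def gconj_def m_assoc inv_mult_group)

lemma listprod_closed [simp]: "set xs \<subseteq> carrier G \<Longrightarrow> listprod G xs \<in> carrier G"
  by (induction xs) auto

lemma listprod_append:
  "set xs \<subseteq> carrier G \<Longrightarrow> set ys \<subseteq> carrier G \<Longrightarrow>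
   listprod G (xs @ ys) = listprod G xs \<otimes> listprod G ys"
  by (induction xs) (auto simp: m_assoc)

lemma gprod_eq_listprod:
  "(\<forall>i\<in>{1..m}. f i \<in> carrier G) \<Longrightarrow> gprod G f m = listprod G (map f [1..<Suc m])"
proof (induction m)
  case (Suc m)
  have "set (map f [1..<Suc m]) \<subseteq> carrier G" using Suc.prems by auto
  then have "listprod G (map f [1..<Suc m]) \<otimes> f (Suc m) = listprod G (map f [1..<Suc m] @ [f (Suc m)])"
    using Suc.prems by (simp add: listprod_append)
  then show ?case using Suc by simp
qed simp

end

section \<open>Expanding commutators of products\<close>

text \<open>Every formal commutator e is the left-normed commutator of a letter with the entries of
  right_spine e.\<close>

fun right_spine :: "'l fcomm \<Rightarrow> 'l fcomm list" where
  "right_spine (Letter x) = []"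
| "right_spine (Comm a b) = right_spine a @ [b]"

lemma right_spine_foldl_Comm: "right_spine (foldl Comm t S) = right_spine t @ S"
  by (induction S arbitrary: t) auto

lemma foldl_Comm_inj: "foldl Comm t S = foldl Comm t' S \<Longrightarrow> t = t'"
  by (induction S arbitrary: t t') (auto dest: meta_spec2)

lemma letters_foldl_Comm: "letters (foldl Comm t S) = letters t \<union> (\<Union>s\<in>set S. letters s)"
  by (induction S arbitrary: t) auto

lemma fweight_pos: "fweight e \<ge> 1"
  by (induction e) auto

lemma fweight_foldl_Comm: "fweight (foldl Comm t S) = fweight t + (\<Sum>s\<leftarrow>S. fweight s)"
  by (induction S arbitrary: t) auto

lemma letters_nonempty: "letters e \<noteq> {}"
  by (induction e) auto

lemma Letter_in_components_iff: "Letter a \<in> components e \<longleftrightarrow> a \<in> letters e"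
  by (induction e) auto

lemma letters_right_spine: "c \<in> set (right_spine e) \<Longrightarrow> letters c \<subseteq> letters e"
  by (induction e) auto

text \<open>conj_step T w is the formal counterpart of (\<Prod>T)^w = \<Prod>(t \<in> T) t [t, w]; iterating over
  W expands (\<Prod>T)^(\<Prod>W). The two commutator expansions follow [u, v V] = [u, V] [u, v]^V and
  [u U, V] = [u, V]^U [U, V].\<close>

fun conj_step :: "'l fcomm list \<Rightarrow> 'l fcomm \<Rightarrow> 'l fcomm list" where
  "conj_step [] w = []"
| "conj_step (t # T) w = t # Comm t w # conj_step T w"

lemma set_conj_step: "set (conj_step T w) = set T \<union> (\<lambda>t. Comm t w) ` set T"
  by (induction T) auto

fun conj_expansion :: "'l fcomm list \<Rightarrow> 'l fcomm list \<Rightarrow> 'l fcomm list" where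
  "conj_expansion T [] = T"
| "conj_expansion T (w # W) = conj_expansion (conj_step T w) W"

fun comm_expansion_right :: "'l fcomm \<Rightarrow> 'l fcomm list \<Rightarrow> 'l fcomm list" where
  "comm_expansion_right u [] = []"
| "comm_expansion_right u (v # V) = comm_expansion_right u V @ conj_expansion [Comm u v] V"

fun comm_expansion :: "'l fcomm list \<Rightarrow> 'l fcomm list \<Rightarrow> 'l fcomm list" where
  "comm_expansion [] V = []"
| "comm_expansion (u # U) V = conj_expansion (comm_expansion_right u V) U @ comm_expansion U V"

lemma conj_expansion_superset: "set T \<subseteq> set (conj_expansion T W)"
proof (induction W arbitrary: T)
  case (Cons w W)
  have "set T \<subseteq> set (conj_step T w)" by (simp add: set_conj_step)
  then show ?case using Cons.IH[of "conj_step T w"] by auto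
qed simp

lemma conj_expansion_elem:
  "e \<in> set (conj_expansion T W) \<Longrightarrow> \<exists>t\<in>set T. \<exists>S. set S \<subseteq> set W \<and> e = foldl Comm t S"
proof (induction W arbitrary: T)
  case Nil
  then show ?case by (intro bexI[of _ e] exI[of _ "[]"]) auto
next
  case (Cons w W)
  from Cons.IH[OF Cons.prems[simplified]] obtain t' S where
    t': "t' \<in> set (conj_step T w)" and S: "set S \<subseteq> set W" "e = foldl Comm t' S"
    by blast
  from t' obtain t where t: "t \<in> set T" "t' = t \<or> t' = Comm t w" by (auto simp: set_conj_step)
  show ?case
  proof (cases "t' = t")
    case True
    then show ?thesis using t S by auto
  next
    case False
    then show ?thesis using t S by (intro bexI[of _ t] exI[of _ "w # S"]) auto
  qed
qed

lemma comm_expansion_right_elem: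
  "e \<in> set (comm_expansion_right u V) \<Longrightarrow>
   \<exists>v\<in>set V. \<exists>S. set S \<subseteq> set V \<and> e = foldl Comm (Comm u v) S"
proof (induction V)
  case (Cons v V)
  then consider "e \<in> set (comm_expansion_right u V)" | "e \<in> set (conj_expansion [Comm u v] V)"
    by auto
  then show ?case
  proof cases
    case 1
    then obtain v' S where "v' \<in> set V" "set S \<subseteq> set V" "e = foldl Comm (Comm u v') S"
      using Cons.IH by blast
    then show ?thesis by (intro bexI[of _ v'] exI[of _ S]) auto
  next
    case 2
    then obtain S where "set S \<subseteq> set V" "e = foldl Comm (Comm u v) S"
      by (auto dest: conj_expansion_elem)
    then show ?thesis by (intro bexI[of _ v] exI[of _ S]) auto
  qed
qed simp

lemma comm_expansion_elem:
  "e \<in> set (comm_expansion U V) \<Longrightarrow>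
   \<exists>u\<in>set U. \<exists>v\<in>set V. \<exists>S. set S \<subseteq> set U \<union> set V \<and> e = foldl Comm (Comm u v) S"
proof (induction U)
  case (Cons u U)
  show ?case
  proof (cases "e \<in> set (comm_expansion U V)")
    case True
    then obtain u' v S where "u' \<in> set U" "v \<in> set V" "set S \<subseteq> set U \<union> set V"
      "e = foldl Comm (Comm u' v) S"
      using Cons.IH by blast
    then show ?thesis by (intro bexI[of _ u'] bexI[of _ v] exI[of _ S]) auto
  next
    case False
    with Cons.prems obtain t S where t: "t \<in> set (comm_expansion_right u V)" "set S \<subseteq> set U"
      "e = foldl Comm t S"
      by (auto dest: conj_expansion_elem)
    from comm_expansion_right_elem[OF t(1)] obtain v S' where
      "v \<in> set V" "set S' \<subseteq> set V" "t = foldl Comm (Comm u v) S'"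
      by blast
    with t show ?thesis by (intro bexI[of _ u] bexI[of _ v] exI[of _ "S' @ S"]) auto
  qed
qed simp

lemma Comm_in_comm_expansion:
  assumes "u \<in> set U" "v \<in> set V"
  shows "Comm u v \<in> set (comm_expansion U V)"
proof -
  have "Comm u v \<in> set (comm_expansion_right u V)"
    using assms(2)
  proof (induction V)
    case (Cons v' V)
    then show ?case using conj_expansion_superset[of "[Comm u v']" V] by (cases "v = v'") auto
  qed simp
  then show ?thesis
    using assms(1)
  proof (induction U)
    case (Cons u' U)
    then show ?case
      using conj_expansion_superset[of "comm_expansion_right u' V" U] by (cases "u = u'") auto
  qed simp
qed

lemma distinct_conj_step:
  "distinct T \<Longrightarrow> (\<forall>t\<in>set T. w \<notin> set (right_spine t)) \<Longrightarrow> distinct (conj_step T w)"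
proof (induction T)
  case (Cons t T)
  have "t \<noteq> Comm t w"
    using arg_cong[of t "Comm t w" size] by auto
  moreover have "t \<notin> set (conj_step T w)" "Comm t w \<notin> set (conj_step T w)"
    using Cons.prems by (auto simp: set_conj_step)
  moreover have "distinct (conj_step T w)"
    using Cons.prems by (intro Cons.IH) auto
  ultimately show ?case by simp
qed simp

lemma distinct_conj_expansion:
  "distinct T \<Longrightarrow> distinct W \<Longrightarrow> (\<forall>t\<in>set T. set (right_spine t) \<inter> set W = {}) \<Longrightarrow>
   distinct (conj_expansion T W)"
proof (induction W arbitrary: T)
  case (Cons w W)
  have "distinct (conj_step T w)"
    using Cons.prems by (intro distinct_conj_step) auto
  moreover have "\<forall>t'\<in>set (conj_step T w). set (right_spine t') \<inter> set W = {}"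
  proof
    fix t' assume "t' \<in> set (conj_step T w)"
    then obtain t where t: "t \<in> set T" "t' = t \<or> t' = Comm t w" by (auto simp: set_conj_step)
    with Cons.prems(3) have "set (right_spine t) \<inter> set W = {}" "w \<notin> set (right_spine t)" by auto
    with Cons.prems(2) t(2) show "set (right_spine t') \<inter> set W = {}" by auto
  qed
  ultimately show ?case using Cons by simp
qed simp

lemma distinct_comm_expansion_right:
  "distinct V \<Longrightarrow> set (right_spine u) \<inter> set V = {} \<Longrightarrow> distinct (comm_expansion_right u V)"
proof (induction V)
  case (Cons v V)
  have "distinct (conj_expansion [Comm u v] V)"
    using Cons.prems by (intro distinct_conj_expansion) auto
  moreover have "e \<notin> set (comm_expansion_right u V)" if e: "e \<in> set (conj_expansion [Comm u v] V)" for e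
  proof
    assume "e \<in> set (comm_expansion_right u V)"
    then obtain v' S where "v' \<in> set V" "e = foldl Comm (Comm u v') S"
      by (blast dest: comm_expansion_right_elem)
    moreover obtain S' where "e = foldl Comm (Comm u v) S'"
      using conj_expansion_elem[OF e] by auto
    ultimately have "right_spine u @ v' # S = right_spine u @ v # S'"
      by (metis right_spine_foldl_Comm right_spine.simps(2) append.assoc append_Cons append_Nil)
    then have "v' = v" by simp
    with \<open>v' \<in> set V\<close> Cons.prems show False by simp
  qed
  ultimately show ?case using Cons by auto
qed simp

lemma append_Cons_eq_first_in:
  assumes "xs @ a # ys = xs' @ a' # ys'" "a \<in> P" "a' \<in> P" "set xs \<inter> P = {}" "set xs' \<inter> P = {}"
  shows "xs = xs' \<and> a = a' \<and> ys = ys'"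
  using assms
proof (induction xs arbitrary: xs')
  case Nil
  then show ?case by (cases xs') auto
next
  case (Cons x xs)
  then show ?case by (cases xs') auto
qed

lemma distinct_comm_expansion:
  assumes "distinct U" "distinct V" "set U \<inter> set V = {}"
    and "\<forall>u\<in>set U. set (right_spine u) \<inter> set V = {}"
    and "\<forall>u\<in>set U. set (right_spine u) \<inter> set U = {}"
  shows "distinct (comm_expansion U V)"
  using assms
proof (induction U)
  case (Cons u U)
  have "distinct (comm_expansion_right u V)"
    using Cons.prems(2,4) by (intro distinct_comm_expansion_right) auto
  moreover have "set (right_spine t) \<inter> set U = {}" if t: "t \<in> set (comm_expansion_right u V)" for t
  proof -
    obtain v S where "v \<in> set V" "set S \<subseteq> set V" "t = foldl Comm (Comm u v) S"
      using comm_expansion_right_elem[OF t] by blast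
    moreover have "set (right_spine u) \<inter> set U = {}" "set V \<inter> set U = {}"
      using Cons.prems(3,5) by auto
    ultimately show ?thesis by (auto simp: right_spine_foldl_Comm)
  qed
  ultimately have distinct_head: "distinct (conj_expansion (comm_expansion_right u V) U)"
    using Cons.prems(1) by (intro distinct_conj_expansion) auto
  have distinct_tail: "distinct (comm_expansion U V)"
    using Cons.prems by (intro Cons.IH) auto
  have "e \<notin> set (comm_expansion U V)"
    if e: "e \<in> set (conj_expansion (comm_expansion_right u V) U)" for e
  proof
    assume "e \<in> set (comm_expansion U V)"
    then obtain u' v' S' where u': "u' \<in> set U" "v' \<in> set V" "e = foldl Comm (Comm u' v') S'"
      by (blast dest: comm_expansion_elem)
    obtain t S where t: "t \<in> set (comm_expansion_right u V)" "e = foldl Comm t S"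
      using conj_expansion_elem[OF e] by blast
    obtain v S1 where v: "v \<in> set V" "t = foldl Comm (Comm u v) S1"
      using comm_expansion_right_elem[OF t(1)] by blast
    have "right_spine e = right_spine u @ v # S1 @ S"
      using t(2) v(2) by (simp add: right_spine_foldl_Comm)
    moreover have "right_spine e = right_spine u' @ v' # S'"
      using u'(3) by (simp add: right_spine_foldl_Comm)
    moreover have "set (right_spine u) \<inter> set V = {}" "set (right_spine u') \<inter> set V = {}"
      using Cons.prems(4) u'(1) by auto
    ultimately have "v = v'" "S1 @ S = S'"
      \<comment> \<open>v is the first entry of the spine of e lying in V\<close>
      using append_Cons_eq_first_in[of "right_spine u" v "S1 @ S" "right_spine u'" v' S' "set V"]
        v(1) u'(2) by auto
    then have "foldl Comm (Comm u' v) (S1 @ S) = e"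
      using u'(3) by simp
    moreover have "foldl Comm (Comm u v) (S1 @ S) = e"
      using t(2) v(2) by simp
    ultimately have "u = u'" by (blast dest: foldl_Comm_inj)
    with u'(1) Cons.prems(1) show False by simp
  qed
  then show ?case
    using distinct_head distinct_tail by (simp only: comm_expansion.simps distinct_append) blast
qed simp

context group
begin

abbreviation feval_prod :: "('l \<Rightarrow> 'a) \<Rightarrow> 'l fcomm list \<Rightarrow> 'a" where
  "feval_prod v T \<equiv> listprod G (map (feval G v) T)"

lemma feval_closed: "(\<forall>a\<in>letters e. v a \<in> carrier G) \<Longrightarrow> feval G v e \<in> carrier G"
  by (induction e) auto

lemma feval_foldl_Comm_closed:
  "feval G v t \<in> carrier G \<Longrightarrow> feval G v ` set S \<subseteq> carrier G \<Longrightarrow>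
   feval G v (foldl Comm t S) \<in> carrier G"
  by (induction S arbitrary: t) auto

lemma feval_conj_expansion_closed:
  "feval G v ` set T \<subseteq> carrier G \<Longrightarrow> feval G v ` set W \<subseteq> carrier G \<Longrightarrow>
   feval G v ` set (conj_expansion T W) \<subseteq> carrier G"
  by (auto dest!: conj_expansion_elem intro!: feval_foldl_Comm_closed)

lemma feval_comm_expansion_right_closed:
  "feval G v u \<in> carrier G \<Longrightarrow> feval G v ` set V \<subseteq> carrier G \<Longrightarrow>
   feval G v ` set (comm_expansion_right u V) \<subseteq> carrier G"
  by (auto dest!: comm_expansion_right_elem intro!: feval_foldl_Comm_closed)

lemma feval_comm_expansion_closed:
  "feval G v ` set U \<subseteq> carrier G \<Longrightarrow> feval G v ` set V \<subseteq> carrier G \<Longrightarrow>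
   feval G v ` set (comm_expansion U V) \<subseteq> carrier G"
  by (auto dest!: comm_expansion_elem intro!: feval_foldl_Comm_closed simp: image_subset_iff)

lemma feval_prod_conj_step:
  assumes "feval G v ` set T \<subseteq> carrier G" "feval G v w \<in> carrier G"
  shows "feval_prod v (conj_step T w) = gconj G (feval_prod v T) (feval G v w)"
  using assms(1)
proof (induction T)
  case (Cons t T)
  then have "feval_prod v T \<in> carrier G" "feval G v t \<in> carrier G" by auto
  with Cons assms(2) show ?case by (simp add: m_assoc[symmetric] mult_gcomm_eq_gconj gconj_mult)
qed (simp add: assms(2))

lemma feval_prod_conj_expansion:
  assumes "feval G v ` set T \<subseteq> carrier G" "feval G v ` set W \<subseteq> carrier G"
  shows "feval_prod v (conj_expansion T W) = gconj G (feval_prod v T) (feval_prod v W)"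
  using assms
proof (induction W arbitrary: T)
  case (Cons w W)
  have closed: "feval G v w \<in> carrier G" "feval_prod v T \<in> carrier G" "feval_prod v W \<in> carrier G"
    using Cons.prems by auto
  have "feval G v ` set (conj_step T w) \<subseteq> carrier G" using Cons.prems by (auto simp: set_conj_step)
  then have "feval_prod v (conj_expansion T (w # W)) = gconj G (feval_prod v (conj_step T w)) (feval_prod v W)"
    using Cons.IH Cons.prems(2) by simp
  also have "\<dots> = gconj G (gconj G (feval_prod v T) (feval G v w)) (feval_prod v W)"
    using Cons.prems closed(1) by (simp only: feval_prod_conj_step)
  finally show ?case using closed by (simp add: gconj_gconj)
qed simp

lemma feval_prod_comm_expansion_right:
  assumes "feval G v u \<in> carrier G" "feval G v ` set V \<subseteq> carrier G"
  shows "feval_prod v (comm_expansion_right u V) = gcomm G (feval G v u) (feval_prod v V)"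
  using assms(2)
proof (induction V)
  case (Cons w V)
  have closed: "feval G v w \<in> carrier G" "feval G v ` set V \<subseteq> carrier G" "feval_prod v V \<in> carrier G"
    using Cons.prems by auto
  have "feval_prod v (comm_expansion_right u (w # V))
    = feval_prod v (comm_expansion_right u V)
      \<otimes> feval_prod v (conj_expansion [Comm u w] V)"
    using closed assms(1) feval_comm_expansion_right_closed[of v u V]
      feval_conj_expansion_closed[of v "[Comm u w]" V]
    by (simp add: listprod_append image_subset_iff)
  also have "\<dots> = gcomm G (feval G v u) (feval_prod v V)
      \<otimes> gconj G (gcomm G (feval G v u) (feval G v w)) (feval_prod v V)"
    using Cons.IH closed assms(1) feval_prod_conj_expansion[of v "[Comm u w]" V] by simp
  finally show ?case using closed assms(1) by (simp add: gcomm_mult_right)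
qed (simp add: assms(1))

lemma feval_prod_comm_expansion:
  assumes "feval G v ` set U \<subseteq> carrier G" "feval G v ` set V \<subseteq> carrier G"
  shows "feval_prod v (comm_expansion U V) = gcomm G (feval_prod v U) (feval_prod v V)"
  using assms(1)
proof (induction U)
  case (Cons u U)
  have closed: "feval G v u \<in> carrier G" "feval G v ` set U \<subseteq> carrier G"
    "feval_prod v U \<in> carrier G" "feval_prod v V \<in> carrier G"
    using Cons.prems assms(2) by auto
  have "feval_prod v (comm_expansion (u # U) V)
    = feval_prod v (conj_expansion (comm_expansion_right u V) U)
      \<otimes> feval_prod v (comm_expansion U V)"
    using closed assms(2) feval_comm_expansion_right_closed[of v u V] feval_comm_expansion_closed[of v U V]
      feval_conj_expansion_closed[of v "comm_expansion_right u V" U]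
    by (simp add: listprod_append image_subset_iff)
  also have "\<dots> = gconj G (gcomm G (feval G v u) (feval_prod v V)) (feval_prod v U)
      \<otimes> gcomm G (feval_prod v U) (feval_prod v V)"
    using Cons.IH closed assms(2) feval_comm_expansion_right_closed[of v u V]
      feval_prod_conj_expansion[of v "comm_expansion_right u V" U] feval_prod_comm_expansion_right[of v u V]
    by simp
  finally show ?case using closed by (simp add: gcomm_mult_left)
qed (use assms(2) in simp)

end

section \<open>Expanding a commutator form\<close>

lemma form_weight_pos: "form_weight g \<ge> 1"
  by (induction g) auto

lemma permutes_split_image:
  fixes \<sigma> :: "nat \<Rightarrow> nat"
  assumes "\<sigma> permutes {1..n1 + n2}"
  shows "k \<in> {1..n1} \<Longrightarrow> \<sigma> k \<in> {1..n1 + n2}"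
    and "k \<in> {1..n2} \<Longrightarrow> \<sigma> (n1 + k) \<in> {1..n1 + n2}"
  using permutes_in_image[OF assms] by auto

lemma permutes_split_cases:
  fixes \<sigma> :: "nat \<Rightarrow> nat"
  assumes "\<sigma> permutes {1..n1 + n2}" "k \<in> {1..n1 + n2}"
  obtains (left) k' where "k' \<in> {1..n1}" "k = \<sigma> k'" | (right) k' where "k' \<in> {1..n2}" "k = \<sigma> (n1 + k')"
proof -
  define k' where "k' = inv_into UNIV \<sigma> k"
  have "k' \<in> {1..n1 + n2}" "k = \<sigma> k'"
    using assms permutes_in_image[OF permutes_inv[OF assms(1)]] permutes_inverses(1)[OF assms(1)]
    by (auto simp: k'_def)
  then show ?thesis
  proof (cases "k' \<le> n1")
    case True
    with \<open>k' \<in> {1..n1 + n2}\<close> \<open>k = \<sigma> k'\<close> show ?thesis by (intro left) auto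
  next
    case False
    with \<open>k' \<in> {1..n1 + n2}\<close> \<open>k = \<sigma> k'\<close> show ?thesis by (intro right[of "k' - n1"]) auto
  qed
qed

lemma disjoint_family_on_permutes_split:
  fixes \<sigma> :: "nat \<Rightarrow> nat"
  assumes \<sigma>: "\<sigma> permutes {1..n1 + n2}" and A: "disjoint_family_on A {1..n1 + n2}"
  shows "disjoint_family_on (\<lambda>k. A (\<sigma> k)) {1..n1}"
    and "disjoint_family_on (\<lambda>k. A (\<sigma> (n1 + k))) {1..n2}"
    and "(\<Union>k\<in>{1..n1}. A (\<sigma> k)) \<inter> (\<Union>k\<in>{1..n2}. A (\<sigma> (n1 + k))) = {}"
proof -
  have inj: "\<sigma> a = \<sigma> b \<longleftrightarrow> a = b" for a b
    using permutes_inj[OF \<sigma>] by (auto dest: injD)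
  have disj: "A (\<sigma> a) \<inter> A (\<sigma> b) = {}" if "a \<in> {1..n1 + n2}" "b \<in> {1..n1 + n2}" "a \<noteq> b" for a b
    using A that inj permutes_in_image[OF \<sigma>] unfolding disjoint_family_on_def by metis
  show "disjoint_family_on (\<lambda>k. A (\<sigma> k)) {1..n1}"
    and "disjoint_family_on (\<lambda>k. A (\<sigma> (n1 + k))) {1..n2}"
    unfolding disjoint_family_on_def by (intro ballI impI disj; simp)+
  show "(\<Union>k\<in>{1..n1}. A (\<sigma> k)) \<inter> (\<Union>k\<in>{1..n2}. A (\<sigma> (n1 + k))) = {}"
  proof -
    have "A (\<sigma> a) \<inter> A (\<sigma> (n1 + b)) = {}" if "a \<in> {1..n1}" "b \<in> {1..n2}" for a b
      using that by (intro disj) auto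
    then show ?thesis by blast
  qed
qed

lemma apply_form_cong:
  "wf_form g \<Longrightarrow> (\<forall>k\<in>{1..form_weight g}. p k = p' k) \<Longrightarrow> apply_form g p = apply_form g p'"
proof (induction g arbitrary: p p')
  case (FNode g1 g2 \<sigma>)
  then have "\<sigma> permutes {1..form_weight g1 + form_weight g2}" by simp
  with FNode show ?case
    using permutes_split_image[of \<sigma> "form_weight g1" "form_weight g2"] by simp
qed simp

definition is_selection :: "nat \<Rightarrow> (nat \<Rightarrow> 'l list) \<Rightarrow> (nat \<Rightarrow> 'l) \<Rightarrow> bool" where
  "is_selection n y p \<longleftrightarrow> (\<forall>k\<in>{1..n}. p k \<in> set (y k))"

lemma apply_form_FNode_glue:
  assumes wf: "wf_form (FNode g1 g2 \<sigma>)"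
    and p1: "is_selection (form_weight g1) (\<lambda>k. y (\<sigma> k)) p1"
    and p2: "is_selection (form_weight g2) (\<lambda>k. y (\<sigma> (form_weight g1 + k))) p2"
  shows "\<exists>p. is_selection (form_weight g1 + form_weight g2) y p
    \<and> apply_form (FNode g1 g2 \<sigma>) p = Comm (apply_form g1 p1) (apply_form g2 p2)"
proof -
  define n1 where "n1 = form_weight g1"
  define n2 where "n2 = form_weight g2"
  have \<sigma>: "\<sigma> permutes {1..n1 + n2}" using wf by (simp add: n1_def n2_def)
  define p where "p k = (let k' = inv_into UNIV \<sigma> k in if k' \<le> n1 then p1 k' else p2 (k' - n1))" for k
  have p_left: "p (\<sigma> k) = p1 k" if "k \<in> {1..n1}" for k
    using that permutes_inverses(2)[OF \<sigma>] by (simp add: p_def)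
  have p_right: "p (\<sigma> (n1 + k)) = p2 k" if "k \<in> {1..n2}" for k
    using that permutes_inverses(2)[OF \<sigma>] by (simp add: p_def)
  have "is_selection (n1 + n2) y p"
    unfolding is_selection_def
  proof
    fix k assume "k \<in> {1..n1 + n2}"
    then show "p k \<in> set (y k)"
      using p1 p2 p_left p_right
      by (cases rule: permutes_split_cases[OF \<sigma>]) (auto simp: is_selection_def n1_def n2_def)
  qed
  moreover have "apply_form g1 (\<lambda>k. p (\<sigma> k)) = apply_form g1 p1"
    using wf p_left by (intro apply_form_cong) (auto simp: n1_def)
  moreover have "apply_form g2 (\<lambda>k. p (\<sigma> (n1 + k))) = apply_form g2 p2"
    using wf p_right by (intro apply_form_cong) (auto simp: n2_def)
  ultimately show ?thesis by (auto simp: n1_def n2_def)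
qed

text \<open>The k-th argument of the form is the product of the block y k of letters.\<close>

fun form_expansion :: "cform \<Rightarrow> (nat \<Rightarrow> 'l list) \<Rightarrow> 'l fcomm list" where
  "form_expansion FLeaf y = map Letter (y 1)"
| "form_expansion (FNode g1 g2 \<sigma>) y =
     comm_expansion (form_expansion g1 (\<lambda>k. y (\<sigma> k)))
       (form_expansion g2 (\<lambda>k. y (\<sigma> (form_weight g1 + k))))"

lemma letters_form_expansion:
  "wf_form g \<Longrightarrow> e \<in> set (form_expansion g y) \<Longrightarrow>
   letters e \<subseteq> (\<Union>k\<in>{1..form_weight g}. set (y k))"
proof (induction g arbitrary: y e)
  case (FNode g1 g2 \<sigma>)
  define U where "U = form_expansion g1 (\<lambda>k. y (\<sigma> k))"
  define V where "V = form_expansion g2 (\<lambda>k. y (\<sigma> (form_weight g1 + k)))"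
  have \<sigma>: "\<sigma> permutes {1..form_weight g1 + form_weight g2}" using FNode.prems by simp
  have "letters s \<subseteq> (\<Union>k\<in>{1..form_weight g1}. set (y (\<sigma> k)))" if "s \<in> set U" for s
    using that FNode.prems(1) FNode.IH(1)[where y="\<lambda>k. y (\<sigma> k)"] unfolding U_def by simp
  moreover have "letters s \<subseteq> (\<Union>k\<in>{1..form_weight g2}. set (y (\<sigma> (form_weight g1 + k))))"
    if "s \<in> set V" for s
    using that FNode.prems(1) FNode.IH(2)[where y="\<lambda>k. y (\<sigma> (form_weight g1 + k))"] unfolding V_def
    by simp
  ultimately have "letters s \<subseteq> (\<Union>k\<in>{1..form_weight g1 + form_weight g2}. set (y k))"
    if "s \<in> set U \<union> set V" for s
    using that permutes_split_image[OF \<sigma>] by blast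
  moreover obtain u w S where "u \<in> set U" "w \<in> set V" "set S \<subseteq> set U \<union> set V"
    "e = foldl Comm (Comm u w) S"
    using comm_expansion_elem[of e U V] FNode.prems(2) unfolding U_def V_def by auto
  ultimately show ?case by (auto simp: letters_foldl_Comm)
qed auto

lemma form_expansion_meets_blocks:
  "wf_form g \<Longrightarrow> e \<in> set (form_expansion g y) \<Longrightarrow> k \<in> {1..form_weight g} \<Longrightarrow>
   letters e \<inter> set (y k) \<noteq> {}"
proof (induction g arbitrary: y e k)
  case (FNode g1 g2 \<sigma>)
  have \<sigma>: "\<sigma> permutes {1..form_weight g1 + form_weight g2}" using FNode.prems by simp
  obtain u w S where u: "u \<in> set (form_expansion g1 (\<lambda>k. y (\<sigma> k)))"
    and w: "w \<in> set (form_expansion g2 (\<lambda>k. y (\<sigma> (form_weight g1 + k))))"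
    and e: "e = foldl Comm (Comm u w) S"
    using comm_expansion_elem FNode.prems(2) by fastforce
  have sub: "letters u \<subseteq> letters e" "letters w \<subseteq> letters e"
    using e by (auto simp: letters_foldl_Comm)
  have "k \<in> {1..form_weight g1 + form_weight g2}" using FNode.prems(3) by simp
  with \<sigma> show ?case
  proof (cases rule: permutes_split_cases)
    case (left k')
    then show ?thesis using FNode.IH(1)[OF _ u, of k'] FNode.prems(1) sub by auto
  next
    case (right k')
    then show ?thesis using FNode.IH(2)[OF _ w, of k'] FNode.prems(1) sub by auto
  qed
qed auto

lemma apply_form_in_form_expansion:
  "wf_form g \<Longrightarrow> is_selection (form_weight g) y p \<Longrightarrow> apply_form g p \<in> set (form_expansion g y)"
proof (induction g arbitrary: y p)
  case (FNode g1 g2 \<sigma>)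
  have \<sigma>: "\<sigma> permutes {1..form_weight g1 + form_weight g2}" using FNode.prems by simp
  have "is_selection (form_weight g1) (\<lambda>k. y (\<sigma> k)) (\<lambda>k. p (\<sigma> k))"
    and "is_selection (form_weight g2) (\<lambda>k. y (\<sigma> (form_weight g1 + k))) (\<lambda>k. p (\<sigma> (form_weight g1 + k)))"
    using FNode.prems(2) permutes_split_image[OF \<sigma>] by (auto simp: is_selection_def)
  with FNode show ?case by (simp add: Comm_in_comm_expansion)
qed (simp add: is_selection_def)

lemma fweight_form_expansion_ge: "e \<in> set (form_expansion g y) \<Longrightarrow> form_weight g \<le> fweight e"
proof (induction g arbitrary: y e)
  case (FNode g1 g2 \<sigma>)
  then obtain u w S where "u \<in> set (form_expansion g1 (\<lambda>k. y (\<sigma> k)))"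
    and "w \<in> set (form_expansion g2 (\<lambda>k. y (\<sigma> (form_weight g1 + k))))"
    and "e = foldl Comm (Comm u w) S"
    by (auto dest: comm_expansion_elem)
  with FNode.IH show ?case by (fastforce simp: fweight_foldl_Comm)
qed auto

lemma form_expansion_elem_basic_if_light:
  "wf_form g \<Longrightarrow> e \<in> set (form_expansion g y) \<Longrightarrow> fweight e \<le> form_weight g \<Longrightarrow>
   \<exists>p. is_selection (form_weight g) y p \<and> e = apply_form g p"
proof (induction g arbitrary: y e)
  case FLeaf
  then obtain a where "a \<in> set (y 1)" "e = Letter a" by auto
  then show ?case by (intro exI[of _ "\<lambda>_. a"]) (simp add: is_selection_def)
next
  case (FNode g1 g2 \<sigma>)
  obtain u w S where u: "u \<in> set (form_expansion g1 (\<lambda>k. y (\<sigma> k)))"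
    and w: "w \<in> set (form_expansion g2 (\<lambda>k. y (\<sigma> (form_weight g1 + k))))"
    and e: "e = foldl Comm (Comm u w) S"
    using comm_expansion_elem FNode.prems(2) by fastforce
  have "form_weight g1 \<le> fweight u" "form_weight g2 \<le> fweight w"
    using u w by (auto dest: fweight_form_expansion_ge)
  moreover have "fweight e = fweight u + fweight w + (\<Sum>s\<leftarrow>S. fweight s)"
    using e by (simp add: fweight_foldl_Comm)
  moreover have "(\<Sum>s\<leftarrow>S. fweight s) \<ge> length S"
  proof (induction S)
    case (Cons s S)
    then show ?case using fweight_pos[of s] by simp
  qed simp
  moreover have "fweight e \<le> form_weight g1 + form_weight g2"
    using FNode.prems(3) by simp
  ultimately have "length S = 0" "fweight u \<le> form_weight g1" "fweight w \<le> form_weight g2"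
    by linarith+
  moreover obtain p1 p2 where "is_selection (form_weight g1) (\<lambda>k. y (\<sigma> k)) p1" "u = apply_form g1 p1"
    and "is_selection (form_weight g2) (\<lambda>k. y (\<sigma> (form_weight g1 + k))) p2" "w = apply_form g2 p2"
    using FNode.IH(1)[OF _ u] FNode.IH(2)[OF _ w] FNode.prems(1) calculation(2,3) by auto
  then obtain p where "is_selection (form_weight g1 + form_weight g2) y p"
    "apply_form (FNode g1 g2 \<sigma>) p = Comm u w"
    using apply_form_FNode_glue[OF FNode.prems(1)] by blast
  ultimately show ?case using e by (intro exI[of _ p]) simp
qed

lemma right_spine_form_expansion_misses_block:
  assumes "wf_form g" "disjoint_family_on (\<lambda>k. set (y k)) {1..form_weight g}"
    and "e \<in> set (form_expansion g y)" "c \<in> set (right_spine e)"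
  shows "\<exists>k\<in>{1..form_weight g}. letters c \<inter> set (y k) = {}"
  using assms
proof (induction g arbitrary: y e)
  case (FNode g1 g2 \<sigma>)
  define n1 where "n1 = form_weight g1"
  define n2 where "n2 = form_weight g2"
  define U where "U = form_expansion g1 (\<lambda>k. y (\<sigma> k))"
  define V where "V = form_expansion g2 (\<lambda>k. y (\<sigma> (n1 + k)))"
  have \<sigma>: "\<sigma> permutes {1..n1 + n2}" using FNode.prems by (simp add: n1_def n2_def)
  have "disjoint_family_on (\<lambda>k. set (y k)) {1..n1 + n2}"
    using FNode.prems(2) by (simp add: n1_def n2_def)
  note disj = disjoint_family_on_permutes_split[OF \<sigma> this]
  have lettersU: "letters s \<subseteq> (\<Union>k\<in>{1..n1}. set (y (\<sigma> k)))" if "s \<in> set U" for s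
    using that letters_form_expansion FNode.prems(1) unfolding U_def n1_def by fastforce
  have lettersV: "letters s \<subseteq> (\<Union>k\<in>{1..n2}. set (y (\<sigma> (n1 + k))))" if "s \<in> set V" for s
    using that letters_form_expansion FNode.prems(1) unfolding V_def n2_def n1_def by fastforce
  have "1 \<in> {1..n1}" "1 \<in> {1..n2}"
    using form_weight_pos by (auto simp: n1_def n2_def)
  obtain u w S where u: "u \<in> set U" and w: "w \<in> set V" and S: "set S \<subseteq> set U \<union> set V"
    and e: "e = foldl Comm (Comm u w) S"
    using comm_expansion_elem FNode.prems(3) unfolding U_def V_def n1_def by fastforce
  then have "c \<in> set (right_spine u) \<or> c \<in> set U \<or> c \<in> set V"
    using FNode.prems(4) by (auto simp: right_spine_foldl_Comm)
  moreover have ?case if c: "c \<in> set (right_spine u)"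
  proof -
    obtain k where "k \<in> {1..n1}" "letters c \<inter> set (y (\<sigma> k)) = {}"
      using FNode.IH(1)[OF _ _ u[unfolded U_def] c] FNode.prems(1,2) disj(1)
      by (auto simp: n1_def n2_def)
    then show ?thesis using permutes_split_image(1)[OF \<sigma>] by (auto simp: n1_def n2_def)
  qed
  moreover have ?case if "c \<in> set U"
  proof -
    have "letters c \<inter> set (y (\<sigma> (n1 + 1))) = {}"
      using lettersU[OF that] disj(3) \<open>1 \<in> {1..n2}\<close> by blast
    then show ?thesis using permutes_split_image(2)[OF \<sigma> \<open>1 \<in> {1..n2}\<close>] by (auto simp: n1_def n2_def)
  qed
  moreover have ?case if "c \<in> set V"
  proof -
    have "letters c \<inter> set (y (\<sigma> 1)) = {}"
      using lettersV[OF that] disj(3) \<open>1 \<in> {1..n1}\<close> by blast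
    then show ?thesis using permutes_split_image(1)[OF \<sigma> \<open>1 \<in> {1..n1}\<close>] by (auto simp: n1_def n2_def)
  qed
  ultimately show ?case by blast
qed auto

lemma distinct_form_expansion:
  assumes "wf_form g" "disjoint_family_on (\<lambda>k. set (y k)) {1..form_weight g}"
    and "\<forall>k\<in>{1..form_weight g}. distinct (y k)"
  shows "distinct (form_expansion g y)"
  using assms
proof (induction g arbitrary: y)
  case FLeaf
  then show ?case by (simp add: distinct_map inj_on_def)
next
  case (FNode g1 g2 \<sigma>)
  let ?n1 = "form_weight g1" and ?n2 = "form_weight g2"
  define U where "U = form_expansion g1 (\<lambda>k. y (\<sigma> k))"
  define V where "V = form_expansion g2 (\<lambda>k. y (\<sigma> (?n1 + k)))"
  have wf: "wf_form g1" "wf_form g2" and \<sigma>: "\<sigma> permutes {1..?n1 + ?n2}"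
    using FNode.prems(1) by simp_all
  have "disjoint_family_on (\<lambda>k. set (y k)) {1..?n1 + ?n2}"
    using FNode.prems(2) by simp
  note disj = disjoint_family_on_permutes_split[OF \<sigma> this]
  have "\<forall>k\<in>{1..?n1}. distinct (y (\<sigma> k))" "\<forall>k\<in>{1..?n2}. distinct (y (\<sigma> (?n1 + k)))"
    using FNode.prems(3) permutes_split_image[OF \<sigma>] by simp_all
  then have "distinct U" "distinct V"
    using FNode.IH(1)[OF wf(1) disj(1)] FNode.IH(2)[OF wf(2) disj(2)] by (simp_all add: U_def V_def)
  have lettersU: "letters s \<subseteq> (\<Union>k\<in>{1..?n1}. set (y (\<sigma> k)))" if "s \<in> set U" for s
    using letters_form_expansion[OF wf(1)] that unfolding U_def .
  have lettersV: "letters s \<subseteq> (\<Union>k\<in>{1..?n2}. set (y (\<sigma> (?n1 + k))))" if "s \<in> set V" for s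
    using letters_form_expansion[OF wf(2)] that unfolding V_def .
  have separated: "s \<notin> set V" if "letters s \<subseteq> letters u" "u \<in> set U" for s u
  proof
    assume "s \<in> set V"
    then have "letters s \<subseteq> (\<Union>k\<in>{1..?n1}. set (y (\<sigma> k))) \<inter> (\<Union>k\<in>{1..?n2}. set (y (\<sigma> (?n1 + k))))"
      using lettersU[OF that(2)] lettersV that(1) by blast
    with disj(3) letters_nonempty[of s] show False by blast
  qed
  then have "set U \<inter> set V = {}" "\<forall>u\<in>set U. set (right_spine u) \<inter> set V = {}"
    by (blast dest: letters_right_spine)+
  moreover have "\<forall>u\<in>set U. set (right_spine u) \<inter> set U = {}"
  proof (intro ballI equals0I)
    fix u c assume u: "u \<in> set U" and c: "c \<in> set (right_spine u) \<inter> set U"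
    obtain k where "k \<in> {1..?n1}" "letters c \<inter> set (y (\<sigma> k)) = {}"
      using right_spine_form_expansion_misses_block[OF wf(1) disj(1)] u c unfolding U_def by blast
    moreover have "c \<in> set (form_expansion g1 (\<lambda>k. y (\<sigma> k)))"
      using c unfolding U_def by blast
    ultimately show False
      using form_expansion_meets_blocks[OF wf(1)] by blast
  qed
  ultimately show ?case
    using \<open>distinct U\<close> \<open>distinct V\<close> by (simp add: U_def V_def distinct_comm_expansion)
qed

text \<open>The letter (j, i) stands for x^(j)_i.\<close>

definition letter_blocks :: "(nat \<Rightarrow> nat) \<Rightarrow> nat \<Rightarrow> (nat \<times> nat) list" where
  "letter_blocks m j = map (Pair j) [1..<Suc (m j)]"

lemma set_letter_blocks [simp]: "set (letter_blocks m j) = Pair j ` {1..m j}"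
  by (auto simp: letter_blocks_def)

lemma distinct_letter_blocks: "distinct (letter_blocks m j)"
  by (simp add: letter_blocks_def distinct_map inj_on_def)

lemma disjoint_family_on_letter_blocks: "disjoint_family_on (\<lambda>j. set (letter_blocks m j)) J"
  by (auto simp: disjoint_family_on_def)

lemma apply_form_letter_blocks_selection:
  assumes "wf_form g" "is_selection (form_weight g) (letter_blocks m) p"
  shows "\<exists>ii. (\<forall>j\<in>{1..form_weight g}. ii j \<in> {1..m j})
    \<and> apply_form g p = apply_form g (\<lambda>j. (j, ii j))"
proof -
  have "\<forall>j\<in>{1..form_weight g}. p j = (j, snd (p j)) \<and> snd (p j) \<in> {1..m j}"
    using assms(2) by (auto simp: is_selection_def)
  moreover from this have "apply_form g p = apply_form g (\<lambda>j. (j, snd (p j)))"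
    by (intro apply_form_cong[OF assms(1)]) auto
  ultimately show ?thesis by (intro exI[of _ "\<lambda>j. snd (p j)"]) auto
qed

context group
begin

lemma feval_form_expansion:
  assumes "wf_form g" "\<forall>k\<in>{1..form_weight g}. v ` set (y k) \<subseteq> carrier G"
  shows "feval G id (apply_form g (\<lambda>k. listprod G (map v (y k))))
    = feval_prod v (form_expansion g y)"
  using assms
proof (induction g arbitrary: y)
  case FLeaf
  then show ?case by (simp add: comp_def)
next
  case (FNode g1 g2 \<sigma>)
  define U where "U = form_expansion g1 (\<lambda>k. y (\<sigma> k))"
  define V where "V = form_expansion g2 (\<lambda>k. y (\<sigma> (form_weight g1 + k)))"
  have wf: "wf_form g1" "wf_form g2" and \<sigma>: "\<sigma> permutes {1..form_weight g1 + form_weight g2}"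
    using FNode.prems(1) by simp_all
  have carrier1: "\<forall>k\<in>{1..form_weight g1}. v ` set (y (\<sigma> k)) \<subseteq> carrier G"
    and carrier2: "\<forall>k\<in>{1..form_weight g2}. v ` set (y (\<sigma> (form_weight g1 + k))) \<subseteq> carrier G"
    using FNode.prems(2) permutes_split_image[OF \<sigma>] by simp_all
  have "feval G v ` set U \<subseteq> carrier G"
  proof (intro image_subsetI feval_closed ballI)
    fix e a assume "e \<in> set U" "a \<in> letters e"
    then obtain k where "k \<in> {1..form_weight g1}" "a \<in> set (y (\<sigma> k))"
      using letters_form_expansion[OF wf(1)] unfolding U_def by blast
    with carrier1 show "v a \<in> carrier G" by blast
  qed
  moreover have "feval G v ` set V \<subseteq> carrier G"
  proof (intro image_subsetI feval_closed ballI)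
    fix e a assume "e \<in> set V" "a \<in> letters e"
    then obtain k where "k \<in> {1..form_weight g2}" "a \<in> set (y (\<sigma> (form_weight g1 + k)))"
      using letters_form_expansion[OF wf(2)] unfolding V_def by blast
    with carrier2 show "v a \<in> carrier G" by blast
  qed
  ultimately show ?case
    using FNode.IH(1)[OF wf(1) carrier1] FNode.IH(2)[OF wf(2) carrier2]
    by (simp add: U_def V_def feval_prod_comm_expansion)
qed

lemma feval_apply_form_gprod:
  assumes "wf_form g" "\<forall>j\<in>{1..form_weight g}. \<forall>i\<in>{1..m j}. x j i \<in> carrier G"
  shows "feval G id (apply_form g (\<lambda>j. gprod G (x j) (m j)))
    = feval_prod (\<lambda>(j, i). x j i) (form_expansion g (letter_blocks m))"
proof -
  have "apply_form g (\<lambda>j. gprod G (x j) (m j))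
    = apply_form g (\<lambda>j. listprod G (map (\<lambda>(j, i). x j i) (letter_blocks m j)))"
    using assms by (intro apply_form_cong) (simp_all add: gprod_eq_listprod letter_blocks_def comp_def)
  moreover have "\<forall>j\<in>{1..form_weight g}. (\<lambda>(j, i). x j i) ` set (letter_blocks m j) \<subseteq> carrier G"
    using assms(2) by auto
  ultimately show ?thesis by (simp add: feval_form_expansion[OF assms(1)])
qed

end

theorem propositionB2:
  fixes G :: "('g, 'b) monoid_scheme"
    and r :: nat and m :: "nat \<Rightarrow> nat" and x :: "nat \<Rightarrow> nat \<Rightarrow> 'g"
    and \<alpha> :: cform
  assumes nil: "nilpotent_group G"
    and r: "r \<ge> 1"
    and m: "\<forall>j\<in>{1..r}. m j \<ge> 1"
    and x: "\<forall>j\<in>{1..r}. \<forall>i\<in>{1..m j}. x j i \<in> carrier G"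
    and \<alpha>: "is_comm_form r \<alpha>"
  shows "\<exists>\<eta> :: (nat \<times> nat) fcomm list.
     (\<forall>l<length \<eta>. letters (\<eta> ! l) \<subseteq> {(j, i). j \<in> {1..r} \<and> i \<in> {1..m j}})
   \<and> feval G id (apply_form \<alpha> (\<lambda>j. gprod G (x j) (m j)))
       = listprod G (map (feval G (\<lambda>(j, i). x j i)) \<eta>)
   \<and> (\<forall>ii :: nat \<Rightarrow> nat. (\<forall>j\<in>{1..r}. ii j \<in> {1..m j}) \<longrightarrow>
        (\<exists>l<length \<eta>. \<eta> ! l = apply_form \<alpha> (\<lambda>j. (j, ii j))))
   \<and> (\<forall>l<length \<eta>. \<forall>j\<in>{1..r}. \<exists>i\<in>{1..m j}. Letter (j, i) \<in> components (\<eta> ! l))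
   \<and> distinct \<eta>
   \<and> (\<forall>l<length \<eta>.
        (\<nexists>ii :: nat \<Rightarrow> nat. (\<forall>j\<in>{1..r}. ii j \<in> {1..m j}) \<and> \<eta> ! l = apply_form \<alpha> (\<lambda>j. (j, ii j)))
        \<longrightarrow> fweight (\<eta> ! l) > r)"
proof -
  interpret group G using nil by (simp add: nilpotent_group_def)
  from \<alpha> have wf: "wf_form \<alpha>" and r_eq: "form_weight \<alpha> = r" by (auto simp: is_comm_form_def)
  let ?\<eta> = "form_expansion \<alpha> (letter_blocks m)"
  have expansion: "feval G id (apply_form \<alpha> (\<lambda>j. gprod G (x j) (m j)))
    = listprod G (map (feval G (\<lambda>(j, i). x j i)) ?\<eta>)"
    using feval_apply_form_gprod[OF wf] x r_eq by simp
  have letters: "\<forall>e\<in>set ?\<eta>. letters e \<subseteq> {(j, i). j \<in> {1..r} \<and> i \<in> {1..m j}}"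
    using letters_form_expansion[OF wf] r_eq by fastforce
  have basic: "\<forall>ii. (\<forall>j\<in>{1..r}. ii j \<in> {1..m j}) \<longrightarrow> apply_form \<alpha> (\<lambda>j. (j, ii j)) \<in> set ?\<eta>"
    using r_eq by (auto intro!: apply_form_in_form_expansion[OF wf] simp: is_selection_def)
  have meets: "\<forall>e\<in>set ?\<eta>. \<forall>j\<in>{1..r}. \<exists>i\<in>{1..m j}. Letter (j, i) \<in> components e"
    using form_expansion_meets_blocks[OF wf] r_eq by (fastforce simp: Letter_in_components_iff)
  have distinct: "distinct ?\<eta>"
    using distinct_form_expansion[OF wf disjoint_family_on_letter_blocks] distinct_letter_blocks by blast
  have heavy: "\<forall>e\<in>set ?\<eta>.
      (\<nexists>ii. (\<forall>j\<in>{1..r}. ii j \<in> {1..m j}) \<and> e = apply_form \<alpha> (\<lambda>j. (j, ii j))) \<longrightarrow> r < fweight e"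
    using form_expansion_elem_basic_if_light[OF wf] apply_form_letter_blocks_selection[OF wf] r_eq
    by (metis not_less)
  show ?thesis
    using letters expansion basic meets distinct heavy
    by (intro exI[of _ ?\<eta>]) (simp only: all_set_conv_all_nth in_set_conv_nth)
qed

end
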